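(* Let $\mathfrak g$ be a $7$-dimensional real Lie algebra and $\pi\colon\mathfrak g\to\mathfrak h$ a Lie algebra epimorphism onto a $6$-dimensional Lie algebra $\mathfrak h$ with $\ker\pi$ contained in the center of $\mathfrak g$. Suppose $\mathfrak h$ admits no symplectic form. Then for a generator $X$ of $\ker\pi$ one has $(X\lrcorner\,\phi)^3=0$ for every closed $\phi\in\Lambda^3\mathfrak g^*$; in particular $\mathfrak g$ admits no calibrated $\mathrm{G}_2$-structure.
   Context: $d$ denotes the Chevalley–Eilenberg differential. A symplectic form on a $6$-dimensional Lie algebra is a closed $2$-form $\omega$ with $\omega^3\neq0$. A $3$-form $\varphi$ on a $7$-dimensional Lie algebra defines a $\mathrm{G}_2$-structure if in some basis $f^1,\dots,f^7$ of $\mathfrak g^*$ it equals $f^{127}+f^{347}+f^{567}+f^{135}-f^{236}-f^{146}-f^{245}$; it is calibrated if $d\varphi=0$. *)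

theory Defs
  imports "HOL-Analysis.Analysis"
begin

definition lie_algebra :: "('a::real_vector \<Rightarrow> 'a \<Rightarrow> 'a) \<Rightarrow> bool" where
  "lie_algebra br \<longleftrightarrow> bilinear br \<and> (\<forall>x. br x x = 0) \<and>
     (\<forall>x y z. br x (br y z) + br y (br z x) + br z (br x y) = 0)"

definition lie_hom ::
  "('a::real_vector \<Rightarrow> 'a \<Rightarrow> 'a) \<Rightarrow> ('b::real_vector \<Rightarrow> 'b \<Rightarrow> 'b) \<Rightarrow> ('a \<Rightarrow> 'b) \<Rightarrow> bool" where
  "lie_hom brg brh p \<longleftrightarrow> linear p \<and> (\<forall>x y. p (brg x y) = brh (p x) (p y))"

definition lie_center :: "('a::real_vector \<Rightarrow> 'a \<Rightarrow> 'a) \<Rightarrow> 'a set" where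
  "lie_center br = {z. \<forall>x. br z x = 0}"

text \<open>Exterior k-forms on a real vector space, represented as alternating
  k-multilinear maps, i.e. functions on lists of vectors of length k (their
  values on lists of other lengths are irrelevant).\<close>
definition alt_form :: "nat \<Rightarrow> ('a::real_vector list \<Rightarrow> real) \<Rightarrow> bool" where
  "alt_form k \<phi> \<longleftrightarrow>
     (\<forall>xs i. length xs = k \<longrightarrow> i < k \<longrightarrow> linear (\<lambda>v. \<phi> (xs[i := v]))) \<and>
     (\<forall>xs i j. length xs = k \<longrightarrow> i < j \<longrightarrow> j < k \<longrightarrow> xs ! i = xs ! j \<longrightarrow> \<phi> xs = 0)"

text \<open>Chevalley--Eilenberg differential (trivial coefficients):
  d phi (x_0,...,x_k) = sum_{i<j} (-1)^(i+j) phi([x_i,x_j], x_0,..,^x_i,..,^x_j,..,x_k).\<close>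
definition ce_d :: "('a::real_vector \<Rightarrow> 'a \<Rightarrow> 'a) \<Rightarrow> ('a list \<Rightarrow> real) \<Rightarrow> 'a list \<Rightarrow> real" where
  "ce_d br \<phi> xs = (\<Sum>j<length xs. \<Sum>i<j.
      (-1) ^ (i + j) * \<phi> (br (xs ! i) (xs ! j) # nths xs (- {i, j})))"

definition closed_form :: "('a::real_vector \<Rightarrow> 'a \<Rightarrow> 'a) \<Rightarrow> nat \<Rightarrow> ('a list \<Rightarrow> real) \<Rightarrow> bool" where
  "closed_form br k \<phi> \<longleftrightarrow> (\<forall>xs. length xs = k + 1 \<longrightarrow> ce_d br \<phi> xs = 0)"

definition contr :: "'a \<Rightarrow> ('a list \<Rightarrow> real) \<Rightarrow> 'a list \<Rightarrow> real" where
  "contr X \<phi> xs = \<phi> (X # xs)"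

definition wedge :: "nat \<Rightarrow> nat \<Rightarrow> ('a list \<Rightarrow> real) \<Rightarrow> ('a list \<Rightarrow> real) \<Rightarrow> 'a list \<Rightarrow> real" where
  "wedge k l \<alpha> \<beta> xs =
     (\<Sum>\<sigma>\<in>{\<sigma>. \<sigma> permutes {..<k + l}}.
        of_int (sign \<sigma>) * \<alpha> (map (\<lambda>i. xs ! \<sigma> i) [0..<k])
                       * \<beta> (map (\<lambda>i. xs ! \<sigma> i) [k..<k + l]))
     / (fact k * fact l)"

definition cube2 :: "('a list \<Rightarrow> real) \<Rightarrow> 'a list \<Rightarrow> real" where
  "cube2 \<omega> = wedge 4 2 (wedge 2 2 \<omega> \<omega>) \<omega>"

definition zero_form :: "nat \<Rightarrow> ('a list \<Rightarrow> real) \<Rightarrow> bool" where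
  "zero_form k \<phi> \<longleftrightarrow> (\<forall>xs. length xs = k \<longrightarrow> \<phi> xs = 0)"

definition symplectic_form :: "('a::real_vector \<Rightarrow> 'a \<Rightarrow> 'a) \<Rightarrow> ('a list \<Rightarrow> real) \<Rightarrow> bool" where
  "symplectic_form br \<omega> \<longleftrightarrow> alt_form 2 \<omega> \<and> closed_form br 2 \<omega> \<and> \<not> zero_form 6 (cube2 \<omega>)"

definition tri :: "(nat \<Rightarrow> 'a \<Rightarrow> real) \<Rightarrow> nat \<Rightarrow> nat \<Rightarrow> nat \<Rightarrow> 'a list \<Rightarrow> real" where
  "tri f a b c xs =
     (\<Sum>\<sigma>\<in>{\<sigma>. \<sigma> permutes {..<3::nat}}.
        of_int (sign \<sigma>) * f a (xs ! \<sigma> 0) * f b (xs ! \<sigma> 1) * f c (xs ! \<sigma> 2))"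

definition dual_basis7 :: "(nat \<Rightarrow> 'a::real_vector \<Rightarrow> real) \<Rightarrow> bool" where
  "dual_basis7 f \<longleftrightarrow> (\<forall>i\<in>{1..7}. linear (f i)) \<and>
     (\<forall>c::nat \<Rightarrow> real. (\<forall>v. (\<Sum>i\<in>{1..7}. c i * f i v) = 0) \<longrightarrow> (\<forall>i\<in>{1..7}. c i = 0))"

definition G2_structure :: "('a::real_vector list \<Rightarrow> real) \<Rightarrow> bool" where
  "G2_structure \<phi> \<longleftrightarrow> (\<exists>f. dual_basis7 f \<and>
     (\<forall>xs. length xs = 3 \<longrightarrow> \<phi> xs =
        tri f 1 2 7 xs + tri f 3 4 7 xs + tri f 5 6 7 xs + tri f 1 3 5 xs
        - tri f 2 3 6 xs - tri f 1 4 6 xs - tri f 2 4 5 xs))"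

definition calibrated_G2 :: "('a::real_vector \<Rightarrow> 'a \<Rightarrow> 'a) \<Rightarrow> ('a list \<Rightarrow> real) \<Rightarrow> bool" where
  "calibrated_G2 br \<phi> \<longleftrightarrow> G2_structure \<phi> \<and> closed_form br 3 \<phi>"

end

theory Submission
  imports Defs
begin

text \<open>
  Let X span
  the kernel and let phi be a closed 3-form on g.  Choosing a linear section s of pi, the
  2-form omega(y,z) = phi(X, s y, s z) on h is well defined modulo the kernel, and it is
  closed because every bracket with the central vector X vanishes in d phi(X,a,b,c).  As h
  admits no symplectic form, omega^3 = 0, and since X contracted into phi is the pull-back
  of omega, its cube vanishes as well.  A G2-structure phi, on the other hand, satisfies
  (X contracted into phi)^3 = +-6 |X|^2 f^k(X) on suitable basis vectors, which is nonzero
  for X nonzero; so g carries no calibrated G2-structure.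
\<close>

text \<open>Signed sums over permutations of a finite set, expanded along the first element:
  every permutation of insert a S is a transposition (a b) composed with a permutation of S.
  Iterating this rule computes the small alternating sums in the wedge products below.\<close>

lemma signed_sum_permutes_insert:
  fixes g :: "('a \<Rightarrow> 'a) \<Rightarrow> real"
  assumes "finite S" "a \<notin> S"
  shows "(\<Sum>p\<in>{p. p permutes insert a S}. of_int (sign p) * g p) =
    (\<Sum>b\<in>insert a S. (if a = b then 1 else -1) *
       (\<Sum>q\<in>{p. p permutes S}. of_int (sign q) * g (Transposition.transpose a b \<circ> q)))"
proof -
  have sign_swap: "of_int (sign (Transposition.transpose a b \<circ> q)) =
      (if a = b then 1 else -1) * (of_int (sign q) :: real)" if "q permutes S" for b q
  proof -
    have "permutation q" using that assms(1) permutation_permutes by blast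
    then show ?thesis by (simp add: sign_compose permutation_swap_id sign_swap_id)
  qed
  show ?thesis
    unfolding sum_over_permutations_insert[OF assms] sum_distrib_left
    by (intro sum.cong refl) (simp add: sign_swap mult.assoc)
qed

lemma permutes_empty_set: "{p. p permutes {}} = {id}"
  by (auto simp: permutes_empty)

lemmas small_numeral_simps = simp_thms numeral_eq_iff zero_neq_numeral numeral_neq_zero
  one_eq_numeral_iff numeral_eq_one_iff num.distinct num.inject zero_neq_one one_neq_zero

lemmas expand_signed_permutation_sum =
  signed_sum_permutes_insert finite_insert finite.emptyI insert_iff empty_iff permutes_empty_set
  sum.insert sum.empty comp_apply id_apply Transposition.transpose_def if_True if_False sign_id
  small_numeral_simps

lemma signed_sum_perm3:
  fixes g :: "nat \<Rightarrow> nat \<Rightarrow> nat \<Rightarrow> real"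
  shows "(\<Sum>p\<in>{p. p permutes {0::nat,1,2}}. of_int (sign p) * g (p 0) (p 1) (p 2)) =
    g 0 1 2 - g 0 2 1 - g 1 0 2 + g 1 2 0 + g 2 0 1 - g 2 1 0"
  by (simp only: expand_signed_permutation_sum) (simp add: algebra_simps)

text \<open>The Pfaffian of the skew 4x4 matrix with entries m i j, rows/columns a b c d.\<close>

definition pf4 :: "(nat \<Rightarrow> nat \<Rightarrow> real) \<Rightarrow> nat \<Rightarrow> nat \<Rightarrow> nat \<Rightarrow> nat \<Rightarrow> real" where
  "pf4 m a b c d = m a b * m c d - m a c * m b d + m a d * m b c"

lemma signed_sum_perm4:
  fixes m :: "nat \<Rightarrow> nat \<Rightarrow> real"
  assumes skew: "\<And>i j. m j i = - m i j"
  shows "(\<Sum>p\<in>{p. p permutes {0::nat,1,2,3}}. of_int (sign p) * (m (p 0) (p 1) * m (p 2) (p 3)))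
      = 8 * pf4 m 0 1 2 3"
  by (simp only: expand_signed_permutation_sum,
      simp only: skew[where i=0 and j=1] skew[where i=0 and j=2] skew[where i=0 and j=3]
        skew[where i=1 and j=2] skew[where i=1 and j=3] skew[where i=2 and j=3],
      simp add: pf4_def algebra_simps)

lemma signed_sum_perm6:
  fixes m :: "nat \<Rightarrow> nat \<Rightarrow> real"
  assumes skew: "\<And>i j. m j i = - m i j"
  shows "(\<Sum>p\<in>{p. p permutes {0::nat,1,2,3,4,5}}.
           of_int (sign p) * (pf4 m (p 0) (p 1) (p 2) (p 3) * m (p 4) (p 5))) =
     144 * (m 0 1 * pf4 m 2 3 4 5 - m 0 2 * pf4 m 1 3 4 5 + m 0 3 * pf4 m 1 2 4 5
            - m 0 4 * pf4 m 1 2 3 5 + m 0 5 * pf4 m 1 2 3 4)"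
  by (simp only: expand_signed_permutation_sum pf4_def,
      simp only: skew[where i=0 and j=1] skew[where i=0 and j=2] skew[where i=0 and j=3]
        skew[where i=0 and j=4] skew[where i=0 and j=5] skew[where i=1 and j=2]
        skew[where i=1 and j=3] skew[where i=1 and j=4] skew[where i=1 and j=5]
        skew[where i=2 and j=3] skew[where i=2 and j=4] skew[where i=2 and j=5]
        skew[where i=3 and j=4] skew[where i=3 and j=5] skew[where i=4 and j=5],
      simp add: algebra_simps)

lemma nat_interval_4: "{..<2+2::nat} = {0,1,2,3}" and nat_interval_6: "{..<4+2::nat} = {0,1,2,3,4,5}"
  by auto

lemma upt_0_2: "[0..<2] = [0::nat,1]" and upt_2_4: "[2..<4] = [2::nat,3]"
  and upt_0_4: "[0..<4] = [0::nat,1,2,3]" and upt_4_6: "[4..<6] = [4::nat,5]"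
  by (simp_all add: upt_rec)

lemma wedge_square_2form:
  fixes \<psi> :: "'a list \<Rightarrow> real"
  assumes skew: "\<And>u v. \<psi> [u,v] = - \<psi> [v,u]"
  shows "wedge 2 2 \<psi> \<psi> [a,b,c,d] =
    2 * (\<psi>[a,b] * \<psi>[c,d] - \<psi>[a,c] * \<psi>[b,d] + \<psi>[a,d] * \<psi>[b,c])"
proof -
  define m where "m i j = \<psi> [[a,b,c,d]!i, [a,b,c,d]!j]" for i j
  have skew_m: "\<And>i j. m j i = - m i j" unfolding m_def using skew by metis
  have "wedge 2 2 \<psi> \<psi> [a,b,c,d] =
      (\<Sum>p\<in>{p. p permutes {0::nat,1,2,3}}. of_int (sign p) * (m (p 0) (p 1) * m (p 2) (p 3))) / 4"
    unfolding wedge_def nat_interval_4 upt_0_2 upt_2_4 by (simp add: m_def mult.assoc)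
  also have "\<dots> = 2 * pf4 m 0 1 2 3"
    using signed_sum_perm4[of m, OF skew_m] by simp
  finally show ?thesis by (simp add: m_def pf4_def)
qed

text \<open>For a 2-form psi, psi^3(x_0..x_5) = 6 Pf(psi(x_i,x_j)), the 6x6 Pfaffian
  written as an expansion along its first row.\<close>

lemma cube2_pfaffian:
  fixes \<psi> :: "'a list \<Rightarrow> real"
  assumes skew: "\<And>u v. \<psi> [u,v] = - \<psi> [v,u]" and len: "length xs = 6"
  shows "cube2 \<psi> xs = 6 * (let m = (\<lambda>i j. \<psi> [xs!i, xs!j]) in
     m 0 1 * pf4 m 2 3 4 5 - m 0 2 * pf4 m 1 3 4 5 + m 0 3 * pf4 m 1 2 4 5
     - m 0 4 * pf4 m 1 2 3 5 + m 0 5 * pf4 m 1 2 3 4)"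
proof -
  define m where "m i j = \<psi> [xs!i, xs!j]" for i j
  have skew_m: "\<And>i j. m j i = - m i j" unfolding m_def using skew by metis
  let ?S = "{p. p permutes {0::nat,1,2,3,4,5}}"
  have "cube2 \<psi> xs = (\<Sum>p\<in>?S. of_int (sign p) * (2 * (pf4 m (p 0) (p 1) (p 2) (p 3) * m (p 4) (p 5))))
      / (fact 4 * fact 2)"
    unfolding cube2_def wedge_def[of 4 2] nat_interval_6 upt_0_4 upt_4_6
    by (rule arg_cong[where f="\<lambda>t. t / (fact 4 * fact 2)"], rule sum.cong[OF refl])
       (simp add: wedge_square_2form[of \<psi>, OF skew] m_def pf4_def algebra_simps)
  also have "\<dots> = (\<Sum>p\<in>?S. of_int (sign p) * (pf4 m (p 0) (p 1) (p 2) (p 3) * m (p 4) (p 5))) / 24"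
    by (simp add: fact_numeral sum_distrib_left[symmetric] mult.left_commute[of _ 2])
  also have "\<dots> = 6 * (m 0 1 * pf4 m 2 3 4 5 - m 0 2 * pf4 m 1 3 4 5 + m 0 3 * pf4 m 1 2 4 5
                      - m 0 4 * pf4 m 1 2 3 5 + m 0 5 * pf4 m 1 2 3 4)"
    unfolding signed_sum_perm6[of m, OF skew_m] by simp
  finally show ?thesis unfolding Let_def m_def[abs_def] .
qed

lemma alt_form_linear: "alt_form k \<phi> \<Longrightarrow> length xs = k \<Longrightarrow> i < k \<Longrightarrow> linear (\<lambda>v. \<phi> (xs[i := v]))"
  by (simp add: alt_form_def)

lemma alt_form_repeat:
  "alt_form k \<phi> \<Longrightarrow> length xs = k \<Longrightarrow> i < j \<Longrightarrow> j < k \<Longrightarrow> xs!i = xs!j \<Longrightarrow> \<phi> xs = 0"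
  unfolding alt_form_def by blast

context
  fixes \<phi> :: "'a::real_vector list \<Rightarrow> real"
  assumes alt: "alt_form 3 \<phi>"
begin

lemma alt3_linear_0: "linear (\<lambda>v. \<phi> [v,y,z])"
  using alt_form_linear[OF alt, of "[0,y,z]" 0] by simp

lemma alt3_linear_1: "linear (\<lambda>v. \<phi> [x,v,z])"
  using alt_form_linear[OF alt, of "[x,0,z]" 1] by simp

lemma alt3_linear_2: "linear (\<lambda>v. \<phi> [x,y,v])"
  using alt_form_linear[OF alt, of "[x,y,0]" 2] by simp

lemma alt3_repeat_01: "\<phi> [x,x,z] = 0"
  using alt_form_repeat[OF alt, of "[x,x,z]" 0 1] by simp

lemma alt3_repeat_02: "\<phi> [x,y,x] = 0"
  using alt_form_repeat[OF alt, of "[x,y,x]" 0 2] by simp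

lemma alt3_repeat_12: "\<phi> [x,y,y] = 0"
  using alt_form_repeat[OF alt, of "[x,y,y]" 1 2] by simp

lemma alt3_zero_head: "\<phi> [0,y,z] = 0"
  using linear_0[OF alt3_linear_0] by simp

lemma alt3_swap_01: "\<phi> [u,v,w] = - \<phi> [v,u,w]"
proof -
  have "0 = \<phi> [u+v,u+v,w]" by (simp add: alt3_repeat_01)
  also have "\<dots> = \<phi> [u,u+v,w] + \<phi> [v,u+v,w]" using linear_add[OF alt3_linear_0] by simp
  also have "\<dots> = \<phi> [u,v,w] + \<phi> [v,u,w]"
    using linear_add[OF alt3_linear_1[where x=u and z=w]] linear_add[OF alt3_linear_1[where x=v and z=w]]
    by (simp add: alt3_repeat_01)
  finally show ?thesis by simp
qed

lemma alt3_swap_12: "\<phi> [x,u,v] = - \<phi> [x,v,u]"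
proof -
  have "0 = \<phi> [x,u+v,u+v]" by (simp add: alt3_repeat_12)
  also have "\<dots> = \<phi> [x,u,u+v] + \<phi> [x,v,u+v]" using linear_add[OF alt3_linear_1] by simp
  also have "\<dots> = \<phi> [x,u,v] + \<phi> [x,v,u]"
    using linear_add[OF alt3_linear_2[where x=x and y=u]] linear_add[OF alt3_linear_2[where x=x and y=v]]
    by (simp add: alt3_repeat_12)
  finally show ?thesis by simp
qed

text \<open>Contracting with X, adding multiples of X to the other two arguments does not
  change the value: X contracted into phi only depends on vectors modulo the line of X.\<close>

lemma alt3_contr_shift: "\<phi> [X, u + a *\<^sub>R X, v + b *\<^sub>R X] = \<phi> [X, u, v]"
proof -
  have "\<phi> [X, u + a *\<^sub>R X, v + b *\<^sub>R X] = \<phi> [X, u, v + b *\<^sub>R X]"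
    using linear_add[OF alt3_linear_1] linear_scale[OF alt3_linear_1] by (simp add: alt3_repeat_01)
  also have "\<dots> = \<phi> [X, u, v]"
    using linear_add[OF alt3_linear_2] linear_scale[OF alt3_linear_2] by (simp add: alt3_repeat_02)
  finally show ?thesis .
qed

end

lemma ce_d_length3: "ce_d br \<psi> [a,b,c] = - \<psi> [br a b, c] + \<psi> [br a c, b] - \<psi> [br b c, a]"
  by (simp add: ce_d_def numeral_eq_Suc nths_Cons)

lemma ce_d_length4:
  "ce_d br \<psi> [x,a,b,c] = - \<psi> [br x a, b, c] + \<psi> [br x b, a, c] - \<psi> [br a b, x, c]
     - \<psi> [br x c, a, b] + \<psi> [br a c, x, b] - \<psi> [br b c, x, a]"
  by (simp add: ce_d_def numeral_eq_Suc nths_Cons)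

lemma wedge_pullback:
  assumes "\<forall>zs. length zs = k \<longrightarrow> \<alpha> zs = \<alpha>' (map p zs)"
    and "\<forall>zs. length zs = l \<longrightarrow> \<beta> zs = \<beta>' (map p zs)"
    and "length xs = k + l"
  shows "wedge k l \<alpha> \<beta> xs = wedge k l \<alpha>' \<beta>' (map p xs)"
  unfolding wedge_def
proof (rule arg_cong[where f="\<lambda>t. t / _"], rule sum.cong[OF refl])
  fix \<sigma> assume "\<sigma> \<in> {\<sigma>. \<sigma> permutes {..<k + l}}"
  then have "\<And>i. i < k + l \<Longrightarrow> \<sigma> i < k + l" using permutes_in_image by fastforce
  then have "map (\<lambda>i. map p xs ! \<sigma> i) [a..<b] = map p (map (\<lambda>i. xs ! \<sigma> i) [a..<b])"
    if "b \<le> k + l" for a b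
    using that assms(3) by auto
  from this[of k 0] this[of "k + l" k]
  show "of_int (sign \<sigma>) * \<alpha> (map (\<lambda>i. xs ! \<sigma> i) [0..<k]) * \<beta> (map (\<lambda>i. xs ! \<sigma> i) [k..<k + l]) =
        of_int (sign \<sigma>) * \<alpha>' (map (\<lambda>i. map p xs ! \<sigma> i) [0..<k]) * \<beta>' (map (\<lambda>i. map p xs ! \<sigma> i) [k..<k + l])"
    using assms(1,2) by (simp del: map_map)
qed

lemma cube2_pullback:
  assumes "\<forall>zs. length zs = 2 \<longrightarrow> \<alpha> zs = \<alpha>' (map p zs)" and "length xs = 6"
  shows "cube2 \<alpha> xs = cube2 \<alpha>' (map p xs)"
proof -
  have "\<forall>zs. length zs = 4 \<longrightarrow> wedge 2 2 \<alpha> \<alpha> zs = wedge 2 2 \<alpha>' \<alpha>' (map p zs)"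
    using wedge_pullback[OF assms(1) assms(1)] by simp
  then show ?thesis unfolding cube2_def using wedge_pullback[OF _ assms(1)] assms(2) by simp
qed

definition induced_form :: "'g \<Rightarrow> ('h \<Rightarrow> 'g) \<Rightarrow> ('g list \<Rightarrow> real) \<Rightarrow> 'h list \<Rightarrow> real" where
  "induced_form X s \<phi> ys = \<phi> (X # map s ys)"

lemma induced_form_alt:
  fixes s :: "'h::real_vector \<Rightarrow> 'g::real_vector"
  assumes alt: "alt_form 3 \<phi>" and lin: "linear s"
  shows "alt_form 2 (induced_form X s \<phi>)"
  unfolding alt_form_def
proof (intro conjI allI impI)
  fix xs :: "'h list" and i :: nat
  assume len: "length xs = 2" and i: "i < 2"
  have "(\<lambda>v. induced_form X s \<phi> (xs[i := v])) = (\<lambda>w. \<phi> ((X # map s xs)[Suc i := w])) \<circ> s"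
    by (rule ext) (simp add: induced_form_def map_update)
  moreover have "linear (\<lambda>w. \<phi> ((X # map s xs)[Suc i := w]))"
    by (rule alt_form_linear[OF alt]) (use len i in auto)
  ultimately show "linear (\<lambda>v. induced_form X s \<phi> (xs[i := v]))"
    using linear_compose[OF lin] by metis
next
  fix xs :: "'h list" and i j :: nat
  assume len: "length xs = 2" and ij: "i < j" "j < 2" and eq: "xs ! i = xs ! j"
  then have "i = 0" "j = 1" by auto
  then show "induced_form X s \<phi> xs = 0" unfolding induced_form_def
    using alt_form_repeat[OF alt, of "X # map s xs" 1 2] len eq by simp
qed

lemma section_shift:
  assumes "linear p" and "\<And>y. p (s y) = y" and "span {X} = {x. p x = 0}"
  obtains c where "s (p u) = u + c *\<^sub>R X"
proof -
  have "p (s (p u) - u) = 0" using linear_diff[OF assms(1)] assms(2) by simp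
  then have "s (p u) - u \<in> span {X}" using assms(3) by simp
  then obtain c where "s (p u) - u = c *\<^sub>R X" using span_singleton by auto
  then show ?thesis using that by (metis add.commute diff_add_cancel)
qed

text \<open>Hence the induced form pulls back to the contraction X into phi; in particular
  it does not depend on the choice of section.\<close>

lemma induced_form_pullback:
  assumes alt: "alt_form 3 \<phi>" and "linear p" and "\<And>y. p (s y) = y" and "span {X} = {x. p x = 0}"
  shows "induced_form X s \<phi> [p u, p v] = \<phi> [X, u, v]"
proof -
  obtain a b where "s (p u) = u + a *\<^sub>R X" "s (p v) = v + b *\<^sub>R X"
    using section_shift[OF assms(2-4)] by metis
  then show ?thesis by (simp add: induced_form_def alt3_contr_shift[OF alt])
qed

text \<open>If X is central and phi is closed, the induced 2-form on h is closed: in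
  d phi(X,a,b,c) all brackets with X vanish, and what remains is d of the induced form.\<close>

lemma induced_form_closed:
  fixes brg :: "'g::real_vector \<Rightarrow> 'g \<Rightarrow> 'g" and brh :: "'h::real_vector \<Rightarrow> 'h \<Rightarrow> 'h"
  assumes alt: "alt_form 3 \<phi>" and closed: "closed_form brg 3 \<phi>"
    and hom: "\<And>x y. p (brg x y) = brh (p x) (p y)" and central: "\<And>y. brg X y = 0"
    and pull: "\<And>u v. induced_form X s \<phi> [p u, p v] = \<phi> [X, u, v]"
    and right_inv: "\<And>y. p (s y) = y"
  shows "closed_form brh 2 (induced_form X s \<phi>)"
  unfolding closed_form_def
proof (intro allI impI)
  fix ys :: "'h list"
  assume "length ys = 2 + 1"
  then obtain y0 y1 y2 where "ys = [y0, y1, y2]"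
    by (auto simp: numeral_eq_Suc length_Suc_conv)
  then obtain a b c where ys: "ys = [p a, p b, p c]"
    using right_inv by metis
  have "ce_d brg \<phi> [X, a, b, c] = 0" using closed unfolding closed_form_def by simp
  then have "\<phi> [X, brg a b, c] - \<phi> [X, brg a c, b] + \<phi> [X, brg b c, a] = 0"
    unfolding ce_d_length4
    using central alt3_zero_head[OF alt] alt3_swap_01[OF alt, of "brg a b" X c]
      alt3_swap_01[OF alt, of "brg a c" X b] alt3_swap_01[OF alt, of "brg b c" X a]
    by simp
  then show "ce_d brh (induced_form X s \<phi>) ys = 0"
    unfolding ys ce_d_length3 hom[symmetric] pull by simp
qed

text \<open>First half of the theorem, valid in any dimension: for X central spanning the
  kernel of a Lie epimorphism onto h without symplectic forms, the contraction X into a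
  closed 3-form phi descends to a closed 2-form on h, whose cube must vanish; pulling back,
  the cube of the contraction itself vanishes.\<close>

lemma cube_of_contraction_vanishes:
  fixes brg :: "'g::real_vector \<Rightarrow> 'g \<Rightarrow> 'g" and brh :: "'h::real_vector \<Rightarrow> 'h \<Rightarrow> 'h"
  assumes lin: "linear p" and surj: "surj p"
    and hom: "\<And>x y. p (brg x y) = brh (p x) (p y)"
    and central: "\<And>y. brg X y = 0" and kernel: "span {X} = {x. p x = 0}"
    and no_symplectic: "\<not> (\<exists>\<omega>. symplectic_form brh \<omega>)"
    and alt: "alt_form 3 \<phi>" and closed: "closed_form brg 3 \<phi>"
  shows "zero_form 6 (cube2 (contr X \<phi>))"
proof -
  obtain s where lin_s: "linear s" and "p \<circ> s = id"
    using linear_surjective_right_inverse[OF lin surj] by blast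
  then have right_inv: "\<And>y. p (s y) = y" by (metis comp_apply id_apply)
  have pull: "\<And>u v. induced_form X s \<phi> [p u, p v] = \<phi> [X, u, v]"
    using induced_form_pullback[OF alt lin right_inv kernel] .
  have "zero_form 6 (cube2 (induced_form X s \<phi>))"
    using no_symplectic induced_form_alt[OF alt lin_s]
      induced_form_closed[OF alt closed hom central pull right_inv]
    unfolding symplectic_form_def by blast
  moreover have "\<forall>zs. length zs = 2 \<longrightarrow> contr X \<phi> zs = induced_form X s \<phi> (map p zs)"
    by (auto simp: numeral_eq_Suc length_Suc_conv contr_def pull)
  ultimately show ?thesis
    unfolding zero_form_def using cube2_pullback by (metis length_map)
qed

lemma kernel_nontrivial:
  fixes p :: "'g::euclidean_space \<Rightarrow> 'h::euclidean_space"
  assumes lin: "linear p" and dims: "DIM('h) < DIM('g)"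
  obtains X where "X \<noteq> 0" "p X = 0"
proof -
  have "\<not> inj p"
  proof
    assume "inj p"
    then have "dim (range p) = DIM('g)"
      using dim_image_eq[OF lin, of UNIV] by (simp add: inj_on_def)
    moreover have "dim (range p) \<le> DIM('h)"
      using dim_subset_UNIV by simp
    ultimately show False using dims by simp
  qed
  then show ?thesis using that linear_injective_0[OF lin] by blast
qed

text \<open>If p is onto and the dimension drops by one, the kernel is at most a line:
  two independent kernel vectors would let p map a basis of g onto a spanning set of h with
  at most DIM(h) - 1 elements.\<close>

lemma kernel_at_most_line:
  fixes p :: "'g::euclidean_space \<Rightarrow> 'h::euclidean_space"
  assumes lin: "linear p" and surj: "surj p" and dims: "DIM('g) = DIM('h) + 1"
    and X: "X \<noteq> 0" "p X = 0" and Y: "p Y = 0"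
  shows "Y \<in> span {X}"
proof (rule ccontr)
  assume Y_out: "Y \<notin> span {X}"
  then have "independent {Y, X}"
    using X by (intro independent_insertI) (auto simp: independent_insert independent_empty)
  then obtain B where B: "{Y, X} \<subseteq> B" "independent B" "UNIV \<subseteq> span B"
    by (metis maximal_independent_subset_extend subset_UNIV)
  have fin: "finite B" using B(2) independent_bound by auto
  have "card B = DIM('g)"
    using dim_eq_card_independent[OF B(2)] dim_eq_full B(3) by (metis dim_UNIV top.extremum_uniqueI)
  moreover have "Y \<noteq> X" using Y_out span_base by blast
  ultimately have card_rest: "card (B - {Y, X}) = DIM('h) - 1"
    using B(1) fin dims by (simp add: card_Diff_subset)
  have "span B = UNIV" using B(3) by auto
  then have "UNIV = p ` span B" using surj by simp
  also have "\<dots> = span (p ` B)" using linear_span_image[OF lin] by simp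
  also have "\<dots> = span (p ` (B - {Y, X}))"
  proof -
    have "p ` B = insert 0 (p ` (B - {Y, X}))" using B(1) X Y by auto
    then show ?thesis by simp
  qed
  finally have "UNIV \<subseteq> span (p ` (B - {Y, X}))" by simp
  then have "dim (UNIV :: 'h set) \<le> card (p ` (B - {Y, X}))"
    using fin by (intro dim_le_card) simp_all
  then have "DIM('h) \<le> card (p ` (B - {Y, X}))" by simp
  also have "\<dots> \<le> DIM('h) - 1" using card_rest card_image_le[of "B - {Y, X}" p] fin by simp
  finally show False using DIM_positive[where 'a='h] by linarith
qed

lemma kernel_is_line:
  fixes p :: "'g::euclidean_space \<Rightarrow> 'h::euclidean_space"
  assumes lin: "linear p" and surj: "surj p" and dims: "DIM('g) = DIM('h) + 1"
  obtains X where "X \<noteq> 0" "span {X} = {x. p x = 0}"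
proof -
  obtain X where X: "X \<noteq> 0" "p X = 0" using kernel_nontrivial[OF lin] dims by auto
  have "span {X} \<subseteq> {x. p x = 0}" using X linear_scale[OF lin] by (auto simp: span_singleton)
  moreover have "{x. p x = 0} \<subseteq> span {X}" using kernel_at_most_line[OF lin surj dims X] by blast
  ultimately show ?thesis using that X(1) by blast
qed

definition det3 :: "(nat \<Rightarrow> 'a \<Rightarrow> real) \<Rightarrow> nat \<Rightarrow> nat \<Rightarrow> nat \<Rightarrow> 'a \<Rightarrow> 'a \<Rightarrow> 'a \<Rightarrow> real" where
  "det3 f a b c x y z = f a x * f b y * f c z - f a x * f b z * f c y - f a y * f b x * f c z
     + f a y * f b z * f c x + f a z * f b x * f c y - f a z * f b y * f c x"

lemma tri_eq_det3: "tri f a b c [x,y,z] = det3 f a b c x y z"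
proof -
  have "{..<3::nat} = {0,1,2}" by auto
  then have "tri f a b c [x,y,z] = (\<Sum>p\<in>{p. p permutes {0::nat,1,2}}. of_int (sign p) *
      (\<lambda>i j k. f a ([x,y,z]!i) * f b ([x,y,z]!j) * f c ([x,y,z]!k)) (p 0) (p 1) (p 2))"
    unfolding tri_def by (simp add: mult.assoc)
  also have "\<dots> = det3 f a b c x y z"
    using signed_sum_perm3[of "\<lambda>i j k. f a ([x,y,z]!i) * f b ([x,y,z]!j) * f c ([x,y,z]!k)"]
    unfolding det3_def by simp
  finally show ?thesis .
qed

definition g2_form :: "(nat \<Rightarrow> 'a \<Rightarrow> real) \<Rightarrow> 'a \<Rightarrow> 'a \<Rightarrow> 'a \<Rightarrow> real" where
  "g2_form f x y z = det3 f 1 2 7 x y z + det3 f 3 4 7 x y z + det3 f 5 6 7 x y z + det3 f 1 3 5 x y z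
        - det3 f 2 3 6 x y z - det3 f 1 4 6 x y z - det3 f 2 4 5 x y z"

lemma G2_structure_values:
  assumes "\<forall>xs. length xs = 3 \<longrightarrow> \<phi> xs =
        tri f 1 2 7 xs + tri f 3 4 7 xs + tri f 5 6 7 xs + tri f 1 3 5 xs
        - tri f 2 3 6 xs - tri f 1 4 6 xs - tri f 2 4 5 xs"
  shows "\<phi> [x,y,z] = g2_form f x y z"
  using assms[rule_format, of "[x,y,z]"] by (simp add: tri_eq_det3 g2_form_def)

lemma g2_form_alt:
  fixes \<phi> :: "'a::real_vector list \<Rightarrow> real"
  assumes lin: "\<And>i. i \<in> {1..7} \<Longrightarrow> linear (f i)"
    and phi_values: "\<And>x y z. \<phi> [x,y,z] = g2_form f x y z"
  shows "alt_form 3 \<phi>"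
proof -
  have f_add: "f i (u + v) = f i u + f i v" if "i \<in> {1..7}" for i u v
    using linear_add[OF lin[OF that]] .
  have f_scale: "f i (c *\<^sub>R u) = c * f i u" if "i \<in> {1..7}" for i c u
    using linear_scale[OF lin[OF that]] by simp
  have "linear (\<lambda>v. g2_form f v y z)" "linear (\<lambda>v. g2_form f x v z)" "linear (\<lambda>v. g2_form f x y v)"
    for x y z
    by (rule linearI; simp add: g2_form_def det3_def f_add f_scale algebra_simps)+
  note linear_slots = this
  show ?thesis unfolding alt_form_def
  proof (intro conjI allI impI)
    fix xs :: "'a list" and i :: nat
    assume len: "length xs = 3" and i: "i < 3"
    obtain x y z where xs: "xs = [x,y,z]" using len by (auto simp: numeral_eq_Suc length_Suc_conv)
    have "i = 0 \<or> i = 1 \<or> i = 2" using i by auto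
    then show "linear (\<lambda>v. \<phi> (xs[i := v]))" using linear_slots by (auto simp: xs phi_values)
  next
    fix xs :: "'a list" and i j :: nat
    assume len: "length xs = 3" and ij: "i < j" "j < 3" and eq: "xs ! i = xs ! j"
    obtain x y z where xs: "xs = [x,y,z]" using len by (auto simp: numeral_eq_Suc length_Suc_conv)
    have "(i = 0 \<and> j = 1) \<or> (i = 0 \<and> j = 2) \<or> (i = 1 \<and> j = 2)" using ij by auto
    then show "\<phi> xs = 0" using eq by (auto simp: xs phi_values g2_form_def det3_def algebra_simps)
  qed
qed

definition coords7 :: "(nat \<Rightarrow> 'a \<Rightarrow> real) \<Rightarrow> 'a \<Rightarrow> real \<times> real \<times> real \<times> real \<times> real \<times> real \<times> real" where
  "coords7 f v = (f 1 v, f 2 v, f 3 v, f 4 v, f 5 v, f 6 v, f 7 v)"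

lemma one_to_seven: "{1..7::nat} = {1,2,3,4,5,6,7}"
  by auto

lemma coords7_linear:
  assumes "\<And>i. i \<in> {1..7} \<Longrightarrow> linear (f i)"
  shows "linear (coords7 f)"
proof -
  have "linear (f i)" if "i \<in> {1,2,3,4,5,6,7}" for i using assms that one_to_seven by blast
  then show ?thesis
    by (intro linearI) (simp_all add: coords7_def linear_add linear_scale)
qed

text \<open>Linear independence of the f^i means that no nonzero vector of R^7 is orthogonal
  to the image of the coordinate map, so the coordinate map is onto.\<close>

lemma coords7_surj:
  assumes basis: "dual_basis7 f"
  shows "surj (coords7 f)"
proof (rule ccontr)
  assume not_surj: "\<not> surj (coords7 f)"
  have lin: "linear (coords7 f)"
    using basis coords7_linear unfolding dual_basis7_def by blast
  have "span (range (coords7 f)) = range (coords7 f)"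
    using linear_span_image[OF lin, of UNIV] by simp
  then have "dim (range (coords7 f)) < DIM(real \<times> real \<times> real \<times> real \<times> real \<times> real \<times> real)"
    using not_surj dim_eq_full[of "range (coords7 f)"] dim_subset_UNIV[of "range (coords7 f)"]
    by (metis order_le_less)
  then obtain c where c: "c \<noteq> 0" "\<And>y. y \<in> span (range (coords7 f)) \<Longrightarrow> orthogonal c y"
    using orthogonal_to_subspace_exists by blast
  obtain c1 c2 c3 c4 c5 c6 c7 where c_def: "c = (c1, c2, c3, c4, c5, c6, c7)"
    by (metis prod.collapse)
  define cf where "cf i = [0, c1, c2, c3, c4, c5, c6, c7] ! i" for i
  have "\<forall>v. (\<Sum>i\<in>{1..7}. cf i * f i v) = 0"
  proof
    fix v
    have "orthogonal c (coords7 f v)" using c(2) span_base by blast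
    then show "(\<Sum>i\<in>{1..7}. cf i * f i v) = 0"
      unfolding one_to_seven by (simp add: orthogonal_def coords7_def cf_def c_def inner_prod_def)
  qed
  then have "\<forall>i\<in>{1..7}. cf i = 0" using basis unfolding dual_basis7_def by blast
  then have "c = 0" unfolding one_to_seven by (simp add: cf_def c_def zero_prod_def)
  then show False using c(1) by simp
qed

lemma dual_basis7_dual_vectors:
  assumes "dual_basis7 f"
  obtains e where "\<And>i j. i \<in> {1..7} \<Longrightarrow> j \<in> {1..7} \<Longrightarrow> f i (e j) = (if i = j then 1 else 0)"
proof -
  define \<delta> where "\<delta> i j = (if i = j then 1 else 0 :: real)" for i j :: nat
  define e where "e j = inv (coords7 f) (\<delta> 1 j, \<delta> 2 j, \<delta> 3 j, \<delta> 4 j, \<delta> 5 j, \<delta> 6 j, \<delta> 7 j)" for j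
  have "coords7 f (e j) = (\<delta> 1 j, \<delta> 2 j, \<delta> 3 j, \<delta> 4 j, \<delta> 5 j, \<delta> 6 j, \<delta> 7 j)" for j
    unfolding e_def using surj_f_inv_f[OF coords7_surj[OF assms]] .
  then have "f i (e j) = \<delta> i j" if "i \<in> {1..7}" for i j
    using that unfolding one_to_seven coords7_def by auto
  then show ?thesis using that unfolding \<delta>_def by blast
qed

text \<open>On a 7-dimensional space the coordinate map is also injective, so a nonzero
  vector has a nonzero coordinate.\<close>

lemma dual_basis7_detects_nonzero:
  fixes f :: "nat \<Rightarrow> 'a::euclidean_space \<Rightarrow> real"
  assumes basis: "dual_basis7 f" and dim: "DIM('a) = 7" and "X \<noteq> 0"
  obtains k where "k \<in> {1..7}" "f k X \<noteq> 0"
proof -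
  have lin: "linear (coords7 f)"
    using basis coords7_linear unfolding dual_basis7_def by blast
  have "inj (coords7 f)"
    using eucl.linear_surjective_imp_injective[OF lin coords7_surj[OF basis]] dim by simp
  then have "coords7 f X \<noteq> 0" using linear_injective_0[OF lin] \<open>X \<noteq> 0\<close> by blast
  then have "\<exists>k\<in>{1..7}. f k X \<noteq> 0" unfolding one_to_seven by (auto simp: coords7_def zero_prod_def)
  then show ?thesis using that by blast
qed

lemma G2_structure_alt_form:
  assumes "G2_structure \<phi>"
  shows "alt_form 3 \<phi>"
proof -
  obtain f where basis: "dual_basis7 f" and phi_def: "\<forall>xs. length xs = 3 \<longrightarrow> \<phi> xs =
        tri f 1 2 7 xs + tri f 3 4 7 xs + tri f 5 6 7 xs + tri f 1 3 5 xs
        - tri f 2 3 6 xs - tri f 1 4 6 xs - tri f 2 4 5 xs"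
    using assms unfolding G2_structure_def by blast
  show ?thesis
    using g2_form_alt[OF _ G2_structure_values[OF phi_def]] basis unfolding dual_basis7_def by blast
qed

lemma G2_contraction_cube_on_dual_basis:
  fixes \<phi> :: "'a::real_vector list \<Rightarrow> real"
  assumes alt: "alt_form 3 \<phi>" and phi_values: "\<And>x y z. \<phi> [x,y,z] = g2_form f x y z"
    and dual: "\<And>i j. i \<in> {1..7} \<Longrightarrow> j \<in> {1..7} \<Longrightarrow> f i (e j) = (if i = j then 1 else 0)"
    and k: "k \<in> {1..7}"
  shows "cube2 (contr X \<phi>) (map e (remove1 k [1,2,3,4,5,6,7])) =
    (-1) ^ (k + 1) * 6 * (\<Sum>i\<in>{1..7}. (f i X)\<^sup>2) * f k X"
proof -
  have skew: "\<And>u v. contr X \<phi> [u,v] = - contr X \<phi> [v,u]"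
    unfolding contr_def by (rule alt3_swap_12[OF alt])
  have "k = 1 \<or> k = 2 \<or> k = 3 \<or> k = 4 \<or> k = 5 \<or> k = 6 \<or> k = 7" using k by auto
  then show ?thesis unfolding one_to_seven
    by (elim disjE; subst cube2_pfaffian[of "contr X \<phi>", OF skew];
        simp add: Let_def pf4_def contr_def phi_values g2_form_def det3_def dual one_to_seven
          power2_eq_square; simp add: algebra_simps)
qed

lemma G2_contraction_cube_nonzero:
  fixes \<phi> :: "'g::euclidean_space list \<Rightarrow> real"
  assumes G2: "G2_structure \<phi>" and dim: "DIM('g) = 7" and "X \<noteq> 0"
  shows "\<not> zero_form 6 (cube2 (contr X \<phi>))"
proof
  assume vanish: "zero_form 6 (cube2 (contr X \<phi>))"
  obtain f where basis: "dual_basis7 f" and phi_def: "\<forall>xs. length xs = 3 \<longrightarrow> \<phi> xs =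
        tri f 1 2 7 xs + tri f 3 4 7 xs + tri f 5 6 7 xs + tri f 1 3 5 xs
        - tri f 2 3 6 xs - tri f 1 4 6 xs - tri f 2 4 5 xs"
    using G2 unfolding G2_structure_def by blast
  have phi_values: "\<And>x y z. \<phi> [x,y,z] = g2_form f x y z"
    using G2_structure_values[OF phi_def] .
  have alt: "alt_form 3 \<phi>" using G2_structure_alt_form[OF G2] .
  obtain e where dual: "\<And>i j. i \<in> {1..7} \<Longrightarrow> j \<in> {1..7} \<Longrightarrow> f i (e j) = (if i = j then 1 else 0)"
    using dual_basis7_dual_vectors[OF basis] by blast
  obtain k where k: "k \<in> {1..7}" "f k X \<noteq> 0"
    using dual_basis7_detects_nonzero[OF basis dim \<open>X \<noteq> 0\<close>] by blast
  have "(\<Sum>i\<in>{1..7}. (f i X)\<^sup>2) > 0"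
    using k by (intro sum_pos2[of _ k]) auto
  moreover have "length (remove1 k [1,2,3,4,5,6,7]) = 6" using k by (auto simp: one_to_seven)
  then have "(-1) ^ (k + 1) * 6 * (\<Sum>i\<in>{1..7}. (f i X)\<^sup>2) * f k X = 0"
    using vanish G2_contraction_cube_on_dual_basis[OF alt phi_values dual k(1)]
    unfolding zero_form_def by (metis length_map)
  ultimately show False using k(2) by simp
qed

theorem mainTheorem6:
  fixes brg :: "'g::euclidean_space \<Rightarrow> 'g \<Rightarrow> 'g"
    and brh :: "'h::euclidean_space \<Rightarrow> 'h \<Rightarrow> 'h"
    and p :: "'g \<Rightarrow> 'h"
  assumes "DIM('g) = 7" and "DIM('h) = 6"
    and "lie_algebra brg" and "lie_algebra brh"
    and "lie_hom brg brh p" and "surj p"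
    and "{x. p x = 0} \<subseteq> lie_center brg"
    and "\<not> (\<exists>\<omega>. symplectic_form brh \<omega>)"
  shows "(\<forall>X. span {X} = {x. p x = 0} \<longrightarrow>
            (\<forall>\<phi>. alt_form 3 \<phi> \<and> closed_form brg 3 \<phi> \<longrightarrow> zero_form 6 (cube2 (contr X \<phi>))))
         \<and> \<not> (\<exists>\<phi>. calibrated_G2 brg \<phi>)"
proof -
  have lin: "linear p" and hom: "\<And>x y. p (brg x y) = brh (p x) (p y)"
    using assms(5) unfolding lie_hom_def by auto
  have vanishing: "zero_form 6 (cube2 (contr X \<phi>))"
    if kernel: "span {X} = {x. p x = 0}" and "alt_form 3 \<phi>" "closed_form brg 3 \<phi>" for X \<phi>
  proof -
    have "X \<in> {x. p x = 0}" using kernel span_base[of X "{X}"] by simp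
    then have "\<And>y. brg X y = 0" using assms(7) unfolding lie_center_def by blast
    then show ?thesis
      using cube_of_contraction_vanishes[OF lin assms(6) hom _ kernel assms(8)] that(2,3) by blast
  qed
  moreover have "\<not> calibrated_G2 brg \<phi>" for \<phi>
  proof
    assume "calibrated_G2 brg \<phi>"
    then have G2: "G2_structure \<phi>" and closed: "closed_form brg 3 \<phi>"
      unfolding calibrated_G2_def by auto
    obtain X where X: "X \<noteq> 0" "span {X} = {x. p x = 0}"
      using kernel_is_line[OF lin assms(6)] assms(1,2) by auto
    show False
      using vanishing[OF X(2) G2_structure_alt_form[OF G2] closed]
        G2_contraction_cube_nonzero[OF G2 assms(1) X(1)] by blast
  qed
  ultimately show ?thesis by blast
qed

end
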